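(* Let $G=(V,E,C,\ell)$ be an edge-labeled graph with exactly two categories $C=\{c_1,c_2\}$. Construct an undirected weighted graph $G'$ on node set $V'=V\cup\{s,t\}$, where $s=v_{c_1}$ and $t=v_{c_2}$ are two new terminal nodes, as follows: for each edge $\{i,j\}\in E$ with label $c=\ell(\{i,j\})$, add the three edges $\{i,j\}$, $\{v_c,i\}$, $\{v_c,j\}$, each of weight $\tfrac12$; weights of repeated edges are added. For $T\subseteq V'$ let $\mathrm{cut}(T)$ denote the total weight of edges of $G'$ with one endpoint in $T$ and the other in $V'\setminus T$. Then for every $S\subseteq V$, \[ \mathrm{cut}(S\cup\{s\})=\mathrm{CatEdgeClus}(Y_S), \] where $Y_S:V\to C$ is the clustering with $Y_S[i]=c_1$ for $i\in S$ and $Y_S[i]=c_2$ for $i\in V\setminus S$.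
   Context: An edge-labeled graph $G=(V,E,C,\ell)$ consists of a finite node set $V$, a finite collection $E$ of edges (2-element subsets of $V$), a finite set $C$ of categories, and a labeling $\ell:E\to C$. A (categorical) clustering is a map $Y:V\to C$. For $e\in E$, the mistake function is $m_Y(e)=1$ if $Y[i]\neq \ell(e)$ for some node $i\in e$, and $m_Y(e)=0$ otherwise. The Categorical Edge Clustering objective is $\mathrm{CatEdgeClus}(Y)=\sum_{e\in E} m_Y(e)$. *)

theory Defs
  imports Complex_Main "HOL-Library.Multiset"
begin

text \<open>Edge-labeled graph: node set V, finite edge index set E (allowing repeated
 edges), endpoint map ends (each edge a 2-element subset of V), labelling lab.\<close>

definition mistake :: "('v \<Rightarrow> 'c) \<Rightarrow> ('e \<Rightarrow> 'v set) \<Rightarrow> ('e \<Rightarrow> 'c) \<Rightarrow> 'e \<Rightarrow> nat" where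
  "mistake Y ends lab e = (if \<exists>i\<in>ends e. Y i \<noteq> lab e then 1 else 0)"

definition CatEdgeClus :: "'e set \<Rightarrow> ('e \<Rightarrow> 'v set) \<Rightarrow> ('e \<Rightarrow> 'c) \<Rightarrow> ('v \<Rightarrow> 'c) \<Rightarrow> nat" where
  "CatEdgeClus E ends lab Y = (\<Sum>e\<in>E. mistake Y ends lab e)"

datatype ('v, 'c) node = Orig 'v | Term 'c

definition aux_edges :: "'e set \<Rightarrow> ('e \<Rightarrow> 'v set) \<Rightarrow> ('e \<Rightarrow> 'c) \<Rightarrow> ('v, 'c) node set multiset" where
  "aux_edges E ends lab =
     (\<Sum>e\<in>E. {# Orig ` ends e #} + image_mset (\<lambda>i. {Term (lab e), Orig i}) (mset_set (ends e)))"

definition aux_weight :: "'e set \<Rightarrow> ('e \<Rightarrow> 'v set) \<Rightarrow> ('e \<Rightarrow> 'c) \<Rightarrow> ('v, 'c) node set \<Rightarrow> real" where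
  "aux_weight E ends lab p = (1/2) * real (count (aux_edges E ends lab) p)"

definition aux_cut :: "('v, 'c) node set \<Rightarrow> 'e set \<Rightarrow> ('e \<Rightarrow> 'v set) \<Rightarrow> ('e \<Rightarrow> 'c) \<Rightarrow> ('v, 'c) node set \<Rightarrow> real" where
  "aux_cut V' E ends lab T = (\<Sum>p\<in>{{x, y} | x y. x \<in> T \<and> y \<in> V' - T}. aux_weight E ends lab p)"

end

theory Submission
  imports Defs
begin

text \<open>Each edge \<open>{i, j}\<close> with label \<open>c\<close> contributes to \<open>G'\<close> the triangle on \<open>i\<close>, \<open>j\<close>, \<open>v\<^sub>c\<close>,
  each side of weight \<open>1/2\<close>. Any cut severs either none or exactly two sides of a triangle,
  and it severs some side iff an endpoint is separated from \<open>v\<^sub>c\<close>. Since \<open>i\<close> lies on the side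
  of \<open>s = v\<^sub>c\<^sub>1\<close> iff \<open>Y\<^sub>S[i] = c\<^sub>1\<close>, this happens iff \<open>Y\<^sub>S\<close> makes a mistake on the edge,
  so every edge contributes exactly its mistake to the cut.\<close>

definition cut_pairs :: "'a set \<Rightarrow> 'a set \<Rightarrow> 'a set set" where
  "cut_pairs V' T = {{x, y} | x y. x \<in> T \<and> y \<in> V' - T}"

definition triangle_edges :: "('e \<Rightarrow> 'v set) \<Rightarrow> ('e \<Rightarrow> 'c) \<Rightarrow> 'e \<Rightarrow> ('v, 'c) node set multiset" where
  "triangle_edges ends lab e =
     {# Orig ` ends e #} + image_mset (\<lambda>i. {Term (lab e), Orig i}) (mset_set (ends e))"

lemma aux_edges_eq_sum_triangle_edges:
  "aux_edges E ends lab = (\<Sum>e\<in>E. triangle_edges ends lab e)"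
  by (simp add: aux_edges_def triangle_edges_def)

lemma triangle_edges_doubleton:
  assumes "a \<noteq> b" and "ends e = {a, b}"
  shows "triangle_edges ends lab e = {#{Orig a, Orig b}, {Term (lab e), Orig a}, {Term (lab e), Orig b}#}"
  using assms by (simp add: triangle_edges_def add_mset_commute)

lemma finite_cut_pairs:
  assumes "finite V'" and "T \<subseteq> V'"
  shows "finite (cut_pairs V' T)"
proof -
  have "cut_pairs V' T \<subseteq> (\<lambda>(x, y). {x, y}) ` (V' \<times> V')"
    using assms(2) by (auto simp: cut_pairs_def)
  then show ?thesis
    using assms(1) by (meson finite_SigmaI finite_imageI finite_subset)
qed

lemma doubleton_in_cut_pairs_iff:
  assumes "x \<in> V'" and "y \<in> V'"
  shows "{x, y} \<in> cut_pairs V' T \<longleftrightarrow> (x \<in> T \<longleftrightarrow> y \<notin> T)"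
proof
  assume "{x, y} \<in> cut_pairs V' T"
  then obtain u w where "{x, y} = {u, w}" "u \<in> T" "w \<notin> T"
    unfolding cut_pairs_def by blast
  then show "x \<in> T \<longleftrightarrow> y \<notin> T"
    by (auto simp: doubleton_eq_iff)
next
  assume "x \<in> T \<longleftrightarrow> y \<notin> T"
  then show "{x, y} \<in> cut_pairs V' T"
    unfolding cut_pairs_def using assms by (cases "x \<in> T") (auto simp: insert_commute)
qed

lemma sum_count_eq_size_filter_mset:
  assumes "finite P"
  shows "(\<Sum>p\<in>P. count M p) = size (filter_mset (\<lambda>p. p \<in> P) M)"
proof (induction M)
  case empty
  then show ?case by simp
next
  case (add x M)
  have "(\<Sum>p\<in>P. count (add_mset x M) p) = (\<Sum>p\<in>P. count M p + (if x = p then 1 else 0))"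
    by (intro sum.cong) auto
  also have "\<dots> = (\<Sum>p\<in>P. count M p) + (\<Sum>p\<in>P. if x = p then 1 else 0)"
    by (rule sum.distrib)
  also have "\<dots> = (\<Sum>p\<in>P. count M p) + (if x \<in> P then 1 else 0)"
    using assms by simp
  finally show ?case
    using add.IH by simp
qed

lemma aux_cut_eq_sum_triangle_crossings:
  assumes "finite E" and "finite V'" and "T \<subseteq> V'"
  shows "aux_cut V' E ends lab T
    = (\<Sum>e\<in>E. real (size (filter_mset (\<lambda>p. p \<in> cut_pairs V' T) (triangle_edges ends lab e)))) / 2"
proof -
  let ?P = "cut_pairs V' T"
  have "aux_cut V' E ends lab T = (\<Sum>p\<in>?P. \<Sum>e\<in>E. real (count (triangle_edges ends lab e) p)) / 2"
    unfolding aux_cut_def cut_pairs_def[symmetric]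
    by (simp add: aux_weight_def aux_edges_eq_sum_triangle_edges
        count_sum sum_divide_distrib)
  also have "\<dots> = (\<Sum>e\<in>E. real (\<Sum>p\<in>?P. count (triangle_edges ends lab e) p)) / 2"
    by (simp add: sum.swap[of _ ?P E])
  finally show ?thesis
    using finite_cut_pairs[OF assms(2,3)] by (simp add: sum_count_eq_size_filter_mset)
qed

lemma triangle_crossings:
  assumes "x \<in> V'" and "y \<in> V'" and "z \<in> V'"
  shows "size (filter_mset (\<lambda>p. p \<in> cut_pairs V' T) {#{x, y}, {z, x}, {z, y}#})
    = (if (x \<in> T \<longleftrightarrow> z \<in> T) \<and> (y \<in> T \<longleftrightarrow> z \<in> T) then 0 else 2)"
  using doubleton_in_cut_pairs_iff[OF assms(1,2)] doubleton_in_cut_pairs_iff[OF assms(3,1)]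
    doubleton_in_cut_pairs_iff[OF assms(3,2)]
  by auto

lemma same_side_as_terminal_iff:
  assumes "c \<in> {c1, c2}" and "c1 \<noteq> c2"
  shows "(Orig i \<in> Orig ` S \<union> {Term c1} \<longleftrightarrow> Term c \<in> Orig ` S \<union> {Term c1})
    \<longleftrightarrow> (if i \<in> S then c1 else c2) = c"
  using assms by auto

lemma triangle_crossings_eq_twice_mistake:
  assumes "ends e \<subseteq> V" and "card (ends e) = 2"
    and "lab e \<in> {c1, c2}" and "c1 \<noteq> c2"
  shows "size (filter_mset (\<lambda>p. p \<in> cut_pairs (Orig ` V \<union> {Term c1, Term c2}) (Orig ` S \<union> {Term c1}))
      (triangle_edges ends lab e))
    = 2 * mistake (\<lambda>i. if i \<in> S then c1 else c2) ends lab e"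
proof -
  let ?V' = "Orig ` V \<union> {Term c1, Term c2}" and ?T = "Orig ` S \<union> {Term c1}"
    and ?Y = "\<lambda>i. if i \<in> S then c1 else c2"
  obtain a b where ab: "a \<noteq> b" "ends e = {a, b}"
    using assms(2) by (meson card_2_iff)
  have "Orig a \<in> ?V'" "Orig b \<in> ?V'" "Term (lab e) \<in> ?V'"
    using assms(1,3) ab by auto
  from triangle_crossings[OF this, of ?T]
  have "size (filter_mset (\<lambda>p. p \<in> cut_pairs ?V' ?T) (triangle_edges ends lab e))
    = (if ?Y a = lab e \<and> ?Y b = lab e then 0 else 2)"
    unfolding triangle_edges_doubleton[of a b ends e lab, OF ab]
    using same_side_as_terminal_iff[OF assms(3,4), of _ S] by simp
  then show ?thesis
    by (simp add: mistake_def ab)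
qed

theorem mainTheorem1:
  fixes V :: "'v set" and E :: "'e set" and ends :: "'e \<Rightarrow> 'v set"
    and lab :: "'e \<Rightarrow> 'c" and c1 c2 :: 'c and S :: "'v set"
  assumes "finite V" and "finite E"
    and "\<forall>e\<in>E. ends e \<subseteq> V \<and> card (ends e) = 2"
    and "c1 \<noteq> c2"
    and "\<forall>e\<in>E. lab e \<in> {c1, c2}"
    and "S \<subseteq> V"
  shows "aux_cut (Orig ` V \<union> {Term c1, Term c2}) E ends lab (Orig ` S \<union> {Term c1})
         = real (CatEdgeClus E ends lab (\<lambda>i. if i \<in> S then c1 else c2))"
proof -
  let ?V' = "Orig ` V \<union> {Term c1, Term c2}" and ?T = "Orig ` S \<union> {Term c1}"
    and ?Y = "\<lambda>i. if i \<in> S then c1 else c2"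
  have "?T \<subseteq> ?V'"
    using assms(6) by auto
  then have "aux_cut ?V' E ends lab ?T
      = (\<Sum>e\<in>E. real (size (filter_mset (\<lambda>p. p \<in> cut_pairs ?V' ?T) (triangle_edges ends lab e)))) / 2"
    using assms(1,2) by (simp add: aux_cut_eq_sum_triangle_crossings)
  also have "\<dots> = (\<Sum>e\<in>E. real (2 * mistake ?Y ends lab e)) / 2"
    using assms(3-5)
    by (intro arg_cong[where f = "\<lambda>x. x / 2"] sum.cong refl arg_cong[where f = real]
        triangle_crossings_eq_twice_mistake) auto
  finally show ?thesis
    by (simp add: CatEdgeClus_def sum_distrib_left[symmetric])
qed

end
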